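(* For every ProbNetKAT program $p$, every input $a\subseteq\mathsf{Pk}$ and every set $A\subseteq 2^{\mathsf{Pk}}$, \[ [\![p^*]\!](a)(A) = \lim_{n\to\infty}[\![p^{(n)}]\!](a)(A). \]
   Context: Fix finitely many fields each ranging over a finite set of naturals; a packet $\pi$ assigns a value $\pi.f$ to each field $f$, $\pi[f:=n]$ updates field $f$; $\mathsf{Pk}$ is the finite set of packets. ProbNetKAT predicates: $t::=\mathsf{false}\mid\mathsf{true}\mid f=n\mid t\,\&\,u\mid t;u\mid\neg t$; programs: $p::=t\mid f\leftarrow n\mid p\,\&\,q\mid p;q\mid p\oplus_r q\mid p^*$ ($r\in[0,1]\cap\mathbb{Q}$). $p^{(0)}=\mathsf{true}$, $p^{(n+1)}=\mathsf{true}\,\&\,(p;p^{(n)})$. Denotational semantics $[\![p]\!]:2^{\mathsf{Pk}}\to\mathcal{D}(2^{\mathsf{Pk}})$, where $\mathcal{D}(X)$ is the set of probability distributions on finite $X$, $\delta_x$ is Dirac, $\mathcal{D}(g)(\mu)=\mu\circ g^{-1}$, $g^\dagger(\mu)(A)=\sum_x g(x)(A)\mu(x)$, $\mu\times\nu$ product, and $\mu\sqsubseteq\nu$ iff $\mu(\{b:c\subseteq b\})\le\nu(\{b:c\subseteq b\})$ for all $c\subseteq\mathsf{Pk}$: $[\![\mathsf{false}]\!](a)=\delta_\emptyset$; $[\![\mathsf{true}]\!](a)=\delta_a$; $[\![f=n]\!](a)=\delta_{\{\pi\in a:\pi.f=n\}}$; $[\![f\leftarrow n]\!](a)=\delta_{\{\pi[f:=n]:\pi\in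 a\}}$; $[\![\neg t]\!](a)=\mathcal{D}(\lambda b.a-b)([\![t]\!](a))$; $[\![p\,\&\,q]\!](a)=\mathcal{D}(\cup)([\![p]\!](a)\times[\![q]\!](a))$; $[\![p;q]\!](a)=[\![q]\!]^\dagger([\![p]\!](a))$; $[\![p\oplus_r q]\!](a)=r[\![p]\!](a)+(1-r)[\![q]\!](a)$; $[\![p^*]\!](a)=\bigsqcup_n[\![p^{(n)}]\!](a)$, the $\sqsubseteq$-supremum of the increasing chain $([\![p^{(n)}]\!](a))_n$. *)

theory Defs
  imports "HOL-Probability.Probability_Mass_Function"
begin

(* Fields are elements of a finite type 'f; field f ranges over the finite set R f of naturals.
   A packet is a function 'f => nat; Pk R is the (finite) set of packets respecting the ranges. *)

type_synonym 'f packet = "'f \<Rightarrow> nat"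

definition Pk :: "('f \<Rightarrow> nat set) \<Rightarrow> 'f packet set" where
  "Pk R = {\<pi>. \<forall>f. \<pi> f \<in> R f}"

definition valid_ranges :: "('f::finite \<Rightarrow> nat set) \<Rightarrow> bool" where
  "valid_ranges R \<longleftrightarrow> (\<forall>f. finite (R f))"

datatype 'f pred =
    PFalse
  | PTrue
  | PTest 'f nat
  | PAnd "'f pred" "'f pred"
  | PSeq "'f pred" "'f pred"
  | PNeg "'f pred"

datatype 'f prog =
    Test "'f pred"
  | Assign 'f nat
  | Par "'f prog" "'f prog"
  | Seq "'f prog" "'f prog"
  | Choice "'f prog" rat "'f prog"
  | Star "'f prog"

primrec wf_pred :: "('f \<Rightarrow> nat set) \<Rightarrow> 'f pred \<Rightarrow> bool" where
  "wf_pred R PFalse = True"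
| "wf_pred R PTrue = True"
| "wf_pred R (PTest f n) = (n \<in> R f)"
| "wf_pred R (PAnd t u) = (wf_pred R t \<and> wf_pred R u)"
| "wf_pred R (PSeq t u) = (wf_pred R t \<and> wf_pred R u)"
| "wf_pred R (PNeg t) = wf_pred R t"

primrec wf_prog :: "('f \<Rightarrow> nat set) \<Rightarrow> 'f prog \<Rightarrow> bool" where
  "wf_prog R (Test t) = wf_pred R t"
| "wf_prog R (Assign f n) = (n \<in> R f)"
| "wf_prog R (Par p q) = (wf_prog R p \<and> wf_prog R q)"
| "wf_prog R (Seq p q) = (wf_prog R p \<and> wf_prog R q)"
| "wf_prog R (Choice p r q) = (wf_prog R p \<and> 0 \<le> r \<and> r \<le> 1 \<and> wf_prog R q)"
| "wf_prog R (Star p) = wf_prog R p"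

primrec ppow :: "'f prog \<Rightarrow> nat \<Rightarrow> 'f prog" where
  "ppow p 0 = Test PTrue"
| "ppow p (Suc n) = Par (Test PTrue) (Seq p (ppow p n))"

definition Dist :: "('f \<Rightarrow> nat set) \<Rightarrow> 'f packet set pmf set" where
  "Dist R = {\<mu>. set_pmf \<mu> \<subseteq> Pow (Pk R)}"

definition dle :: "('f \<Rightarrow> nat set) \<Rightarrow> 'f packet set pmf \<Rightarrow> 'f packet set pmf \<Rightarrow> bool" where
  "dle R \<mu> \<nu> \<longleftrightarrow> (\<forall>c \<subseteq> Pk R. measure_pmf.prob \<mu> {b. c \<subseteq> b} \<le> measure_pmf.prob \<nu> {b. c \<subseteq> b})"

definition dsup :: "('f \<Rightarrow> nat set) \<Rightarrow> (nat \<Rightarrow> 'f packet set pmf) \<Rightarrow> 'f packet set pmf" where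
  "dsup R M = (THE \<mu>. \<mu> \<in> Dist R \<and> (\<forall>n. dle R (M n) \<mu>)
                 \<and> (\<forall>\<nu> \<in> Dist R. (\<forall>n. dle R (M n) \<nu>) \<longrightarrow> dle R \<mu> \<nu>))"

primrec star_approx :: "('f packet set \<Rightarrow> 'f packet set pmf) \<Rightarrow> nat \<Rightarrow> 'f packet set \<Rightarrow> 'f packet set pmf" where
  "star_approx S 0 a = return_pmf a"
| "star_approx S (Suc n) a =
     map_pmf (\<lambda>(x, y). x \<union> y) (pair_pmf (return_pmf a) (bind_pmf (S a) (star_approx S n)))"

primrec sem_pred :: "'f pred \<Rightarrow> 'f packet set \<Rightarrow> 'f packet set pmf" where
  "sem_pred PFalse a = return_pmf {}"
| "sem_pred PTrue a = return_pmf a"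
| "sem_pred (PTest f n) a = return_pmf {\<pi> \<in> a. \<pi> f = n}"
| "sem_pred (PAnd t u) a = map_pmf (\<lambda>(x, y). x \<union> y) (pair_pmf (sem_pred t a) (sem_pred u a))"
| "sem_pred (PSeq t u) a = bind_pmf (sem_pred t a) (sem_pred u)"
| "sem_pred (PNeg t) a = map_pmf (\<lambda>b. a - b) (sem_pred t a)"

(* Choice: r*[[p]](a) + (1-r)*[[q]](a), realised as the mixture via a Bernoulli coin *)
primrec sem :: "('f \<Rightarrow> nat set) \<Rightarrow> 'f prog \<Rightarrow> 'f packet set \<Rightarrow> 'f packet set pmf" where
  "sem R (Test t) a = sem_pred t a"
| "sem R (Assign f n) a = return_pmf {\<pi>(f := n) | \<pi>. \<pi> \<in> a}"
| "sem R (Par p q) a = map_pmf (\<lambda>(x, y). x \<union> y) (pair_pmf (sem R p a) (sem R q a))"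
| "sem R (Seq p q) a = bind_pmf (sem R p a) (sem R q)"
| "sem R (Choice p r q) a =
     bind_pmf (bernoulli_pmf (real_of_rat r)) (\<lambda>b. if b then sem R p a else sem R q a)"
| "sem R (Star p) a = dsup R (\<lambda>n. star_approx (sem R p) n a)"

end

theory Submission
  imports Defs
begin

(* The approximants [[p^(n)]](a) form a \<sqsubseteq>-chain: unfolding p^(n+1) = true & (p ; p^(n))
   reduces the comparison of up-set probabilities to the previous step.  On the finite space
   2^Pk a distribution is determined by its up-set probabilities: by Moebius inversion,
   \<mu>{b} = \<mu>{x. b \<subseteq> x} minus the masses of the strict supersets of b.  Hence the bounded
   increasing up-set probabilities converge, so do the point masses, and their limit is a
   distribution which is the \<sqsubseteq>-supremum; finiteness turns pointwise convergence into
   convergence on every event. *)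

lemma measure_pmf_eq_sum_pmf:
  assumes "finite S" "set_pmf M \<subseteq> S"
  shows "measure_pmf.prob M A = (\<Sum>x\<in>A \<inter> S. pmf M x)"
proof -
  have "measure_pmf.prob M A = measure_pmf.prob M (A \<inter> S \<inter> set_pmf M)"
    using assms(2) by (metis inf.absorb_iff2 inf_assoc measure_Int_set_pmf)
  also have "\<dots> = measure_pmf.prob M (A \<inter> S)"
    by (rule measure_Int_set_pmf)
  finally show ?thesis
    using assms(1) by (simp add: measure_measure_pmf_finite)
qed

lemma measure_bind_pmf_mono:
  assumes "\<And>x. measure_pmf.prob (f x) A \<le> measure_pmf.prob (g x) A"
  shows "measure_pmf.prob (bind_pmf M f) A \<le> measure_pmf.prob (bind_pmf M g) A"
proof -
  have "emeasure (measure_pmf (bind_pmf M f)) A \<le> emeasure (measure_pmf (bind_pmf M g)) A"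
    unfolding emeasure_bind_pmf
    by (intro nn_integral_mono) (simp add: measure_pmf.emeasure_eq_measure assms)
  then show ?thesis
    by (simp add: measure_pmf.emeasure_eq_measure)
qed

lemma pmf_limit_finite_support:
  fixes M :: "nat \<Rightarrow> 'a pmf"
  assumes fin: "finite S" and supp: "\<And>n. set_pmf (M n) \<subseteq> S"
    and conv: "\<And>x. x \<in> S \<Longrightarrow> convergent (\<lambda>n. pmf (M n) x)"
  obtains \<mu> where "set_pmf \<mu> \<subseteq> S"
    and "\<And>A. (\<lambda>n. measure_pmf.prob (M n) A) \<longlonglongrightarrow> measure_pmf.prob \<mu> A"
proof -
  define m where "m x = (if x \<in> S then lim (\<lambda>n. pmf (M n) x) else 0)" for x
  have m_lim: "(\<lambda>n. pmf (M n) x) \<longlonglongrightarrow> m x" if "x \<in> S" for x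
    using conv[OF that] that by (simp add: m_def convergent_LIMSEQ_iff)
  have m_nonneg: "0 \<le> m x" for x
    using LIMSEQ_le_const[OF m_lim] by (cases "x \<in> S") (auto simp: m_def)
  have "(\<lambda>n. \<Sum>x\<in>S. pmf (M n) x) \<longlonglongrightarrow> (\<Sum>x\<in>S. m x)"
    by (intro tendsto_sum m_lim)
  then have "(\<Sum>x\<in>S. m x) = 1"
    using sum_pmf_eq_1[OF fin supp] LIMSEQ_unique[OF _ tendsto_const] by simp
  moreover have "(\<integral>\<^sup>+x. ennreal (m x) \<partial>count_space UNIV) = (\<Sum>x\<in>S. ennreal (m x))"
    by (rule nn_integral_count_space'[OF fin]) (auto simp: m_def)
  ultimately have "(\<integral>\<^sup>+x. ennreal (m x) \<partial>count_space UNIV) = 1"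
    using m_nonneg by (simp add: sum_ennreal)
  then have pmf_\<mu>: "pmf (embed_pmf m) x = m x" for x
    using m_nonneg by (simp add: pmf_embed_pmf)
  show ?thesis
  proof
    show supp_\<mu>: "set_pmf (embed_pmf m) \<subseteq> S"
      by (auto simp: set_pmf_iff pmf_\<mu> m_def split: if_splits)
    fix A
    have "(\<lambda>n. \<Sum>x\<in>A \<inter> S. pmf (M n) x) \<longlonglongrightarrow> (\<Sum>x\<in>A \<inter> S. m x)"
      by (intro tendsto_sum m_lim) simp
    then show "(\<lambda>n. measure_pmf.prob (M n) A) \<longlonglongrightarrow> measure_pmf.prob (embed_pmf m) A"
      using measure_pmf_eq_sum_pmf[OF fin] supp supp_\<mu> by (simp add: pmf_\<mu>)
  qed
qed

lemma measure_up_set_eq: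
  assumes "finite P" "set_pmf M \<subseteq> Pow P" "b \<subseteq> P"
  shows "measure_pmf.prob M {x. b \<subseteq> x} = pmf M b + (\<Sum>b'\<in>{b'. b \<subset> b' \<and> b' \<subseteq> P}. pmf M b')"
proof -
  have "{x. b \<subseteq> x} \<inter> Pow P = insert b {b'. b \<subset> b' \<and> b' \<subseteq> P}"
    using assms(3) by auto
  moreover have "finite {b'. b \<subset> b' \<and> b' \<subseteq> P}"
    using assms(1) by (auto intro: rev_finite_subset[of "Pow P"])
  ultimately show ?thesis
    using measure_pmf_eq_sum_pmf[of "Pow P" M] assms by simp
qed

lemma card_Diff_strict_superset_less:
  assumes "finite P" "b \<subset> b'" "b' \<subseteq> P"
  shows "card (P - b') < card (P - b)"
  using assms by (intro psubset_card_mono) auto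

lemma pmf_eqI_up_sets:
  assumes fin: "finite P" and supp: "set_pmf M \<subseteq> Pow P" "set_pmf N \<subseteq> Pow P"
    and up: "\<And>c. c \<subseteq> P \<Longrightarrow> measure_pmf.prob M {x. c \<subseteq> x} = measure_pmf.prob N {x. c \<subseteq> x}"
  shows "M = N"
proof (rule pmf_eqI)
  have "pmf M b = pmf N b" if "b \<subseteq> P" for b
    using that
  proof (induction "card (P - b)" arbitrary: b rule: less_induct)
    case less
    have "(\<Sum>b'\<in>{b'. b \<subset> b' \<and> b' \<subseteq> P}. pmf M b') = (\<Sum>b'\<in>{b'. b \<subset> b' \<and> b' \<subseteq> P}. pmf N b')"
      using less card_Diff_strict_superset_less[OF fin] by (intro sum.cong) auto
    then show ?case
      using measure_up_set_eq[OF fin supp(1) less.prems] measure_up_set_eq[OF fin supp(2) less.prems]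
        up[OF less.prems] by linarith
  qed
  moreover have "pmf M b = 0" "pmf N b = 0" if "\<not> b \<subseteq> P" for b
    using that supp by (auto simp: set_pmf_iff)
  ultimately show "pmf M b = pmf N b" for b
    by (cases "b \<subseteq> P") auto
qed

lemma convergent_pmf_if_convergent_up_sets:
  assumes fin: "finite P" and supp: "\<And>n. set_pmf (M n) \<subseteq> Pow P"
    and up: "\<And>c. c \<subseteq> P \<Longrightarrow> convergent (\<lambda>n. measure_pmf.prob (M n) {x. c \<subseteq> x})"
  shows "b \<subseteq> P \<Longrightarrow> convergent (\<lambda>n. pmf (M n) b)"
proof (induction "card (P - b)" arbitrary: b rule: less_induct)
  case less
  have "(\<lambda>n. pmf (M n) b) = (\<lambda>n. measure_pmf.prob (M n) {x. b \<subseteq> x}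
          - (\<Sum>b'\<in>{b'. b \<subset> b' \<and> b' \<subseteq> P}. pmf (M n) b'))"
    using measure_up_set_eq[OF fin supp less.prems] by auto
  moreover have "convergent (\<lambda>n. \<Sum>b'\<in>{b'. b \<subset> b' \<and> b' \<subseteq> P}. pmf (M n) b')"
    using less card_Diff_strict_superset_less[OF fin] by (intro convergent_sum) auto
  ultimately show ?case
    using up[OF less.prems] by (simp add: convergent_diff)
qed

lemma dle_antisym:
  assumes "finite (Pk R)" "\<mu> \<in> Dist R" "\<nu> \<in> Dist R" "dle R \<mu> \<nu>" "dle R \<nu> \<mu>"
  shows "\<mu> = \<nu>"
  using assms unfolding Dist_def dle_def
  by (intro pmf_eqI_up_sets[of "Pk R"]) (auto intro: antisym)

lemma dsup_eqI:
  assumes fin: "finite (Pk R)" and \<mu>: "\<mu> \<in> Dist R"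
    and inc: "\<And>c. incseq (\<lambda>n. measure_pmf.prob (M n) {b. c \<subseteq> b})"
    and lim: "\<And>c. (\<lambda>n. measure_pmf.prob (M n) {b. c \<subseteq> b}) \<longlonglongrightarrow> measure_pmf.prob \<mu> {b. c \<subseteq> b}"
  shows "dsup R M = \<mu>"
  unfolding dsup_def
proof (rule the_equality)
  have upper: "\<forall>n. dle R (M n) \<mu>"
    unfolding dle_def using incseq_le[OF inc lim] by blast
  have least: "dle R \<mu> \<nu>" if "\<forall>n. dle R (M n) \<nu>" for \<nu>
    using that unfolding dle_def by (auto intro: LIMSEQ_le_const2[OF lim])
  show "\<mu> \<in> Dist R \<and> (\<forall>n. dle R (M n) \<mu>) \<and> (\<forall>\<nu>\<in>Dist R. (\<forall>n. dle R (M n) \<nu>) \<longrightarrow> dle R \<mu> \<nu>)"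
    using \<mu> upper least by blast
  show "\<nu> = \<mu>" if "\<nu> \<in> Dist R \<and> (\<forall>n. dle R (M n) \<nu>) \<and> (\<forall>\<nu>'\<in>Dist R. (\<forall>n. dle R (M n) \<nu>') \<longrightarrow> dle R \<nu> \<nu>')"
    for \<nu>
    using that \<mu> upper least dle_antisym[OF fin] by blast
qed

lemma dsup_chain:
  assumes fin: "finite (Pk R)" and supp: "\<And>n. set_pmf (M n) \<subseteq> Pow (Pk R)"
    and mono: "\<And>n c. measure_pmf.prob (M n) {b. c \<subseteq> b} \<le> measure_pmf.prob (M (Suc n)) {b. c \<subseteq> b}"
  shows "dsup R M \<in> Dist R"
    and "(\<lambda>n. measure_pmf.prob (M n) A) \<longlonglongrightarrow> measure_pmf.prob (dsup R M) A"
proof -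
  have inc: "incseq (\<lambda>n. measure_pmf.prob (M n) {b. c \<subseteq> b})" for c
    using mono by (rule incseq_SucI)
  have up_conv: "convergent (\<lambda>n. measure_pmf.prob (M n) {b. c \<subseteq> b})" for c
    by (rule incseq_convergent[OF inc, where B=1]) (auto simp: convergent_def)
  have pmf_conv: "convergent (\<lambda>n. pmf (M n) b)" if "b \<in> Pow (Pk R)" for b
    using convergent_pmf_if_convergent_up_sets[where M=M, OF fin supp up_conv] that by simp
  obtain \<mu> where \<mu>: "set_pmf \<mu> \<subseteq> Pow (Pk R)"
    and lim: "\<And>A. (\<lambda>n. measure_pmf.prob (M n) A) \<longlonglongrightarrow> measure_pmf.prob \<mu> A"
    using pmf_limit_finite_support[where M=M, OF _ supp pmf_conv] fin by auto
  have "dsup R M = \<mu>"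
    using \<mu> by (intro dsup_eqI[OF fin _ inc lim]) (simp add: Dist_def)
  then show "dsup R M \<in> Dist R" "(\<lambda>n. measure_pmf.prob (M n) A) \<longlonglongrightarrow> measure_pmf.prob (dsup R M) A"
    using \<mu> lim by (simp_all add: Dist_def)
qed

lemma measure_union_return_up_set:
  "measure_pmf.prob (map_pmf (\<lambda>(x, y). x \<union> y) (pair_pmf (return_pmf a) X)) {b. c \<subseteq> b}
   = measure_pmf.prob X {b. c - a \<subseteq> b}"
proof -
  have "(\<lambda>(x, y). x \<union> y) \<circ> Pair a = (\<lambda>y. a \<union> y)" by auto
  moreover have "(\<lambda>y. a \<union> y) -` {b. c \<subseteq> b} = {b. c - a \<subseteq> b}" by auto
  ultimately show ?thesis by (simp add: pair_return_pmf1 map_pmf_comp)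
qed

lemma star_approx_up_set_mono:
  "measure_pmf.prob (star_approx S n a) {b. c \<subseteq> b}
     \<le> measure_pmf.prob (star_approx S (Suc n) a) {b. c \<subseteq> b}"
proof (induction n arbitrary: a c)
  case 0
  show ?case
  proof (cases "c \<subseteq> a")
    case True
    then have "{b. c - a \<subseteq> b} = UNIV" by blast
    then show ?thesis
      unfolding star_approx.simps measure_union_return_up_set by simp
  next
    case False
    then show ?thesis
      unfolding star_approx.simps measure_union_return_up_set by simp
  qed
next
  case (Suc n)
  show ?case
    unfolding star_approx.simps(2)[of S "Suc n" a] star_approx.simps(2)[of S n a]
      measure_union_return_up_set
    by (rule measure_bind_pmf_mono) (rule Suc.IH)
qed

lemma sem_ppow: "sem R (ppow p n) = star_approx (sem R p) n"
  by (induction n) (simp, rule ext, simp)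

lemma set_pmf_union_pair_subset_Pow:
  assumes "set_pmf M \<subseteq> Pow P" "set_pmf N \<subseteq> Pow P"
  shows "set_pmf (map_pmf (\<lambda>(x, y). x \<union> y) (pair_pmf M N)) \<subseteq> Pow P"
  using assms by (auto simp: set_pair_pmf)

lemma set_pmf_bind_subset_Pow:
  assumes "set_pmf M \<subseteq> Pow P" "\<And>x. x \<subseteq> P \<Longrightarrow> set_pmf (K x) \<subseteq> Pow P"
  shows "set_pmf (bind_pmf M K) \<subseteq> Pow P"
  using assms by (auto simp: set_bind_pmf)

lemma set_pmf_star_approx:
  assumes "\<And>x. x \<subseteq> P \<Longrightarrow> set_pmf (S x) \<subseteq> Pow P" "a \<subseteq> P"
  shows "set_pmf (star_approx S n a) \<subseteq> Pow P"
  using assms(2)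
proof (induction n arbitrary: a)
  case (Suc n)
  then show ?case
    unfolding star_approx.simps
    by (intro set_pmf_union_pair_subset_Pow set_pmf_bind_subset_Pow assms(1)) auto
qed simp

lemma set_pmf_sem_pred: "set_pmf (sem_pred t a) \<subseteq> Pow a"
proof (induction t arbitrary: a)
  case (PAnd t u)
  then show ?case
    unfolding sem_pred.simps by (intro set_pmf_union_pair_subset_Pow)
next
  case (PSeq t u)
  then show ?case by force
qed auto

lemma finite_Pk:
  assumes "valid_ranges R"
  shows "finite (Pk R)"
proof -
  have "Pk R = PiE UNIV R"
    unfolding Pk_def PiE_def Pi_def extensional_def by auto
  then show ?thesis
    using assms unfolding valid_ranges_def by (simp add: finite_PiE)
qed

lemma set_pmf_sem:
  assumes fin: "finite (Pk R)"
  shows "wf_prog R p \<Longrightarrow> a \<subseteq> Pk R \<Longrightarrow> set_pmf (sem R p a) \<subseteq> Pow (Pk R)"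
proof (induction p arbitrary: a)
  case (Test t)
  then show ?case using set_pmf_sem_pred[of t a] by auto
next
  case (Assign f n)
  then show ?case by (auto simp: Pk_def)
next
  case (Par p q)
  then show ?case
    unfolding sem.simps by (intro set_pmf_union_pair_subset_Pow) simp_all
next
  case (Seq p q)
  then show ?case
    unfolding sem.simps by (intro set_pmf_bind_subset_Pow) simp_all
next
  case (Choice p r q)
  then show ?case
    unfolding sem.simps set_bind_pmf by (intro UN_least) simp
next
  case (Star p)
  have "set_pmf (star_approx (sem R p) n a) \<subseteq> Pow (Pk R)" for n
    using Star by (intro set_pmf_star_approx) auto
  then show ?case
    using dsup_chain(1)[where M = "\<lambda>n. star_approx (sem R p) n a", OF fin _ star_approx_up_set_mono]
    by (simp add: Dist_def)
qed

theorem lemmaA2: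
  fixes R :: "'f::finite \<Rightarrow> nat set"
    and p :: "'f prog"
    and a :: "'f packet set"
    and A :: "'f packet set set"
  assumes "valid_ranges R"
    and "wf_prog R p"
    and "a \<subseteq> Pk R"
    and "A \<subseteq> Pow (Pk R)"
  shows "(\<lambda>n. measure_pmf.prob (sem R (ppow p n) a) A)
           \<longlonglongrightarrow> measure_pmf.prob (sem R (Star p) a) A"
proof -
  \<comment> \<open>The convergence holds for every event.\<close>
  have fin: "finite (Pk R)"
    using assms(1) by (rule finite_Pk)
  have "set_pmf (star_approx (sem R p) n a) \<subseteq> Pow (Pk R)" for n
    using set_pmf_sem[OF fin] assms(2,3) by (intro set_pmf_star_approx) auto
  from dsup_chain(2)[where M = "\<lambda>n. star_approx (sem R p) n a", OF fin this star_approx_up_set_mono]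
  show ?thesis
    unfolding sem_ppow sem.simps .
qed

end
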